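(* Let $\bm S_0\in U(2N_0)$. Then $U_1=\{\bm M\in U(2N_0):\det(\bm S_0-\bm M)\ne0\}$ is path-connected. If $\bm S_0=\bm S_0^T$, then $U_2=\{\bm M\in U_1:\bm M=\bm M^T\}$ is path-connected. If $\bm S_0=\bm S_0^P$, then $U_3=\{\bm M\in U_1:\bm M=\bm M^P\}$ is path-connected. If $\bm S_0=\bm S_0^T=\bm S_0^P$, then $U_4=\{\bm M\in U_1:\bm M=\bm M^T=\bm M^P\}$ is path-connected.
   Context: $N_0\ge1$ integer; $U(n)$ the unitary group; $\bm M^T$ the transpose; $\bm M^P:=\bm R_{2N_0}\bm M\bm R_{2N_0}$ with $\bm R_{2N_0}=\begin{bmatrix}0&\bm I_{N_0}\\\bm I_{N_0}&0\end{bmatrix}$. *)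

theory Defs
  imports "HOL-Analysis.Analysis"
begin

text \<open>Matrices of size 2N0 x 2N0 are indexed by the type 'n + 'n, where 'n is an
arbitrary finite (nonempty) type with CARD('n) = N0 >= 1. Index Inl i is row/column i,
Inr i is row/column N0 + i.\<close>

definition conj_transpose :: "complex ^'m ^'m \<Rightarrow> complex ^'m ^'m" where
  "conj_transpose M = (\<chi> i j. cnj (M $ j $ i))"

definition unitary_group :: "(complex ^'m ^'m) set" where
  "unitary_group = {M. conj_transpose M ** M = mat 1 \<and> M ** conj_transpose M = mat 1}"

fun swap_half :: "'n + 'n \<Rightarrow> 'n + 'n" where
  "swap_half (Inl i) = Inr i"
| "swap_half (Inr i) = Inl i"

text \<open>R = [[0, I],[I, 0]]\<close>
definition R_mat :: "complex ^('n::finite + 'n) ^('n + 'n)" where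
  "R_mat = (\<chi> i j. if j = swap_half i then 1 else 0)"

definition P_conj :: "complex ^('n::finite + 'n) ^('n + 'n) \<Rightarrow> complex ^('n::finite + 'n) ^('n + 'n)" where
  "P_conj M = R_mat ** M ** R_mat"

end

theory Submission
  imports Defs
begin

text \<open>For \<open>M\<close> unitary with \<open>S\<^sub>0 - M\<close> invertible put \<open>G = (S\<^sub>0 - M)\<^sup>-\<^sup>1\<close>. Unitarity of \<open>S\<^sub>0\<close>
and \<open>M\<close> becomes the real-affine equation \<open>S\<^sub>0 G + G\<^sup>* S\<^sub>0\<^sup>* = I\<close>, and conversely every solution
\<open>G\<close> is invertible (if \<open>G x = 0\<close> then \<open>|x|\<^sup>2 = \<langle>G x, S\<^sub>0\<^sup>* x\<rangle> = 0\<close>) with \<open>S\<^sub>0 - G\<^sup>-\<^sup>1\<close> unitary.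
So \<open>U\<^sub>1\<close> is the image of a convex set under the continuous map \<open>G \<mapsto> S\<^sub>0 - G\<^sup>-\<^sup>1\<close>. The
symmetries \<open>M = M\<^sup>T\<close> and \<open>M = M\<^sup>P\<close> cut out real-linear subspaces that are stable under
\<open>X \<mapsto> S\<^sub>0 - X\<close> and under inversion, so the same argument applies to \<open>U\<^sub>2\<close>, \<open>U\<^sub>3\<close>, \<open>U\<^sub>4\<close>.\<close>

lemma matrix_inv_right:
  fixes A :: "'a::field^'n^'n"
  assumes "invertible A"
  shows "A ** matrix_inv A = mat 1"
  using someI_ex[OF assms[unfolded invertible_def]] unfolding matrix_inv_def by blast

lemma matrix_inv_left:
  fixes A :: "'a::field^'n^'n"
  assumes "invertible A"
  shows "matrix_inv A ** A = mat 1"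
  using matrix_inv_right[OF assms] matrix_left_right_inverse by blast

lemma matrix_inv_unique:
  fixes A B :: "'a::field^'n^'n"
  assumes "B ** A = mat 1"
  shows "matrix_inv A = B"
proof -
  have "A ** B = mat 1"
    using assms matrix_left_right_inverse by blast
  then have "invertible A"
    using invertible_right_inverse by blast
  have "matrix_inv A = (B ** A) ** matrix_inv A"
    using assms by simp
  also have "\<dots> = B"
    by (simp flip: matrix_mul_assoc add: matrix_inv_right[OF \<open>invertible A\<close>])
  finally show ?thesis .
qed

lemma invertible_matrix_inv:
  fixes A :: "'a::field^'n^'n"
  assumes "invertible A"
  shows "invertible (matrix_inv A)"
  using matrix_inv_right[OF assms] invertible_left_inverse by blast

lemma matrix_inv_matrix_inv:
  fixes A :: "'a::field^'n^'n"
  assumes "invertible A"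
  shows "matrix_inv (matrix_inv A) = A"
  using matrix_inv_unique matrix_inv_right[OF assms] by blast

lemma matrix_add_rdistrib: "(A + B) ** C = A ** C + B ** (C::'a::semiring_1^'p^'n)"
  by (simp add: matrix_matrix_mult_def vec_eq_iff sum.distrib algebra_simps)

lemma matrix_diff_ldistrib: "A ** (B - C) = A ** B - A ** (C::'a::ring_1^'p^'n)"
  by (simp add: matrix_matrix_mult_def vec_eq_iff sum_subtractf algebra_simps)

lemma matrix_diff_rdistrib: "(A - B) ** C = A ** C - B ** (C::'a::ring_1^'p^'n)"
  by (simp add: matrix_matrix_mult_def vec_eq_iff sum_subtractf algebra_simps)

lemma conj_transpose_mult: "conj_transpose (A ** B) = conj_transpose B ** conj_transpose A"
  by (simp add: conj_transpose_def matrix_matrix_mult_def vec_eq_iff mult.commute)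

lemma conj_transpose_conj_transpose [simp]: "conj_transpose (conj_transpose A) = A"
  by (simp add: conj_transpose_def vec_eq_iff)

lemma conj_transpose_mat_1 [simp]: "conj_transpose (mat 1) = mat 1"
  by (simp add: conj_transpose_def vec_eq_iff mat_def)

lemma conj_transpose_add: "conj_transpose (A + B) = conj_transpose A + conj_transpose B"
  by (simp add: conj_transpose_def vec_eq_iff)

lemma conj_transpose_diff: "conj_transpose (A - B) = conj_transpose A - conj_transpose B"
  by (simp add: conj_transpose_def vec_eq_iff)

lemma conj_transpose_scaleR: "conj_transpose (c *\<^sub>R A) = c *\<^sub>R conj_transpose A"
  by (simp add: conj_transpose_def vec_eq_iff)

lemma unitary_group_iff_left_inverse:
  "M \<in> unitary_group \<longleftrightarrow> conj_transpose M ** M = mat 1"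
  unfolding unitary_group_def using matrix_left_right_inverse by blast

lemma inner_matrix_vector_mult:
  fixes A :: "complex^'n^'n"
  shows "inner (A *v x) y = inner x (conj_transpose A *v y)"
proof -
  have cnj_shift: "inner (a * b) c = inner b (cnj a * c)" for a b c :: complex
    by (simp add: inner_complex_def algebra_simps)
  have "inner (A *v x) y = (\<Sum>i\<in>UNIV. \<Sum>j\<in>UNIV. inner (x$j) (cnj (A$i$j) * y$i))"
    by (simp add: inner_vec_def matrix_vector_mult_def inner_sum_left cnj_shift)
  also have "\<dots> = (\<Sum>j\<in>UNIV. \<Sum>i\<in>UNIV. inner (x$j) (cnj (A$i$j) * y$i))"
    by (rule sum.swap)
  also have "\<dots> = inner x (conj_transpose A *v y)"
    by (simp add: inner_vec_def matrix_vector_mult_def inner_sum_right conj_transpose_def)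
  finally show ?thesis .
qed

lemma continuous_on_det: "continuous_on S (det :: 'a::real_normed_field^'n^'n \<Rightarrow> 'a)"
  unfolding det_def by (intro continuous_intros)

lemma matrix_inv_cramer:
  fixes A :: "'a::field^'n^'n"
  assumes "invertible A"
  shows "matrix_inv A $ k $ j = det (\<chi> i l. if l = k then mat 1 $ i $ j else A $ i $ l) / det A"
proof -
  have "A *v (\<chi> k. matrix_inv A $ k $ j) = (\<chi> i. mat 1 $ i $ j)"
    using matrix_inv_right[OF assms]
    by (simp add: vec_eq_iff matrix_vector_mult_def matrix_matrix_mult_def)
  with assms show ?thesis
    by (simp add: cramer invertible_det_nz fun_eq_iff cong: if_cong)
qed

lemma continuous_on_matrix_inv:
  fixes S :: "('a::real_normed_field^'n^'n) set"
  assumes "\<And>A. A \<in> S \<Longrightarrow> invertible A"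
  shows "continuous_on S matrix_inv"
proof -
  have "continuous_on S (\<lambda>A. if l = k then mat 1 $ i $ j else A $ i $ l)" for i j k l
    by (cases "l = k")
      (simp_all add: continuous_on_component[OF continuous_on_component[OF continuous_on_id]])
  then have "continuous_on S (\<lambda>A. \<chi> k j. det (\<chi> i l. if l = k then mat 1 $ i $ j else A $ i $ l) / det A)"
    using assms
    by (intro continuous_intros continuous_on_compose2[OF continuous_on_det])
      (auto simp: invertible_det_nz)
  then show ?thesis
    by (rule continuous_on_eq) (simp add: vec_eq_iff matrix_inv_cramer assms)
qed

text \<open>As \<open>M\<close> runs over the unitary matrices with \<open>S - M\<close> invertible, \<open>(S - M)\<^sup>-\<^sup>1\<close> runs
over this set.\<close>
definition cayley_set :: "complex^'n^'n \<Rightarrow> (complex^'n^'n) set" where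
  "cayley_set S = {G. S ** G + conj_transpose G ** conj_transpose S = mat 1}"

lemma convex_cayley_set: "convex (cayley_set S)"
proof (rule convexI)
  fix G H and u v :: real
  assume "G \<in> cayley_set S" "H \<in> cayley_set S" "u + v = 1"
  moreover have "S ** (u *\<^sub>R G + v *\<^sub>R H) + conj_transpose (u *\<^sub>R G + v *\<^sub>R H) ** conj_transpose S
      = u *\<^sub>R (S ** G + conj_transpose G ** conj_transpose S)
        + v *\<^sub>R (S ** H + conj_transpose H ** conj_transpose S)"
    by (simp add: matrix_add_ldistrib matrix_add_rdistrib matrix_scalar_ac
        flip: scalar_matrix_assoc add: conj_transpose_add conj_transpose_scaleR algebra_simps)
  ultimately show "u *\<^sub>R G + v *\<^sub>R H \<in> cayley_set S"
    by (simp add: cayley_set_def flip: scaleR_add_left)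
qed

lemma invertible_if_in_cayley_set:
  assumes "G \<in> cayley_set S"
  shows "invertible G"
proof -
  have "x = 0" if "G *v x = 0" for x
  proof -
    have "x = (S ** G + conj_transpose G ** conj_transpose S) *v x"
      using assms by (simp add: cayley_set_def)
    also have "\<dots> = conj_transpose G *v (conj_transpose S *v x)"
      by (simp add: matrix_vector_mult_add_rdistrib flip: matrix_vector_mul_assoc add: that)
    finally have "inner x x = inner (G *v x) (conj_transpose S *v x)"
      by (metis inner_matrix_vector_mult)
    then show "x = 0"
      by (simp add: that)
  qed
  then show ?thesis
    using invertible_left_inverse matrix_left_invertible_ker by blast
qed

lemma conj_transpose_congruence_hermitian:
  fixes N X :: "complex^'n^'n"
  shows "conj_transpose N ** (X + conj_transpose X) ** N
    = conj_transpose N ** X ** N + conj_transpose (conj_transpose N ** X ** N)"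
  by (simp add: matrix_add_ldistrib matrix_add_rdistrib conj_transpose_mult matrix_mul_assoc)

lemma unitary_diff_matrix_inv:
  assumes S: "S \<in> unitary_group" and G: "G \<in> cayley_set S"
  shows "S - matrix_inv G \<in> unitary_group"
proof -
  define N where "N = matrix_inv G"
  have "G ** N = mat 1"
    using matrix_inv_right[OF invertible_if_in_cayley_set[OF G]] by (simp add: N_def)
  then have "conj_transpose N ** S ** G ** N = conj_transpose N ** S"
    by (metis matrix_mul_assoc matrix_mul_rid)
  then have "conj_transpose N ** N = conj_transpose N ** S + conj_transpose S ** N"
    using conj_transpose_congruence_hermitian[of N "S ** G"] G
    by (simp add: cayley_set_def conj_transpose_mult matrix_mul_assoc)
  moreover have "conj_transpose S ** S = mat 1"
    using S by (simp add: unitary_group_iff_left_inverse)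
  ultimately have "conj_transpose (S - N) ** (S - N) = mat 1"
    by (simp add: conj_transpose_diff matrix_diff_ldistrib matrix_diff_rdistrib algebra_simps)
  then show ?thesis
    by (simp add: unitary_group_iff_left_inverse N_def)
qed

lemma matrix_inv_diff_in_cayley_set:
  assumes S: "S \<in> unitary_group" and M: "M \<in> unitary_group" and D: "invertible (S - M)"
  shows "matrix_inv (S - M) \<in> cayley_set S"
proof -
  define G where "G = matrix_inv (S - M)"
  have DG: "(S - M) ** G = mat 1"
    using matrix_inv_right[OF D] by (simp add: G_def)
  then have GD: "conj_transpose G ** conj_transpose (S - M) = mat 1"
    by (metis conj_transpose_mult conj_transpose_mat_1)
  have "conj_transpose (S - M) ** S + conj_transpose S ** (S - M)
      = conj_transpose (S - M) ** (S - M)"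
    using S M by (simp add: unitary_group_iff_left_inverse conj_transpose_diff
        matrix_diff_ldistrib matrix_diff_rdistrib)
  then have "conj_transpose G ** (conj_transpose (S - M) ** S + conj_transpose S ** (S - M)) ** G
      = mat 1"
    using DG GD by (metis matrix_mul_assoc matrix_mul_rid)
  moreover have "conj_transpose G ** conj_transpose (S - M) ** S ** G = S ** G"
    using GD by simp
  ultimately show ?thesis
    using conj_transpose_congruence_hermitian[of G "conj_transpose (S - M) ** S"]
    by (simp add: cayley_set_def G_def conj_transpose_mult matrix_mul_assoc)
qed

lemma path_connected_unitary_nonsingular_diff:
  fixes S :: "complex^'n^'n"
  assumes S: "S \<in> unitary_group" and "convex K"
    and diff_closed: "\<And>X. X \<in> K \<Longrightarrow> S - X \<in> K"
    and inv_closed: "\<And>X. X \<in> K \<Longrightarrow> invertible X \<Longrightarrow> matrix_inv X \<in> K"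
  shows "path_connected {M \<in> unitary_group. det (S - M) \<noteq> 0 \<and> M \<in> K}"
proof -
  let ?C = "cayley_set S \<inter> K"
  have "{M \<in> unitary_group. det (S - M) \<noteq> 0 \<and> M \<in> K} = (\<lambda>G. S - matrix_inv G) ` ?C"
  proof (intro equalityI subsetI)
    fix M assume M: "M \<in> {M \<in> unitary_group. det (S - M) \<noteq> 0 \<and> M \<in> K}"
    then have D: "invertible (S - M)"
      by (simp add: invertible_det_nz)
    moreover have "M = S - matrix_inv (matrix_inv (S - M))"
      using D by (simp add: matrix_inv_matrix_inv)
    moreover have "matrix_inv (S - M) \<in> ?C"
      using M D S by (simp add: matrix_inv_diff_in_cayley_set diff_closed inv_closed)
    ultimately show "M \<in> (\<lambda>G. S - matrix_inv G) ` ?C"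
      by blast
  next
    fix M assume "M \<in> (\<lambda>G. S - matrix_inv G) ` ?C"
    then obtain G where G: "G \<in> cayley_set S" "G \<in> K" and M: "M = S - matrix_inv G"
      by blast
    have "invertible G"
      using G(1) by (rule invertible_if_in_cayley_set)
    then show "M \<in> {M \<in> unitary_group. det (S - M) \<noteq> 0 \<and> M \<in> K}"
      using G S
      by (simp add: M unitary_diff_matrix_inv invertible_matrix_inv diff_closed inv_closed
          flip: invertible_det_nz)
  qed
  moreover have "continuous_on ?C (\<lambda>G. S - matrix_inv G)"
    by (intro continuous_intros continuous_on_matrix_inv) (auto intro: invertible_if_in_cayley_set)
  ultimately show ?thesis
    using path_connected_continuous_image convex_imp_path_connected
      convex_Int[OF convex_cayley_set \<open>convex K\<close>] by metis
qed

lemma convex_fixpoints_linear: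
  assumes "linear f"
  shows "convex {x. x = f x}"
  using assms by (simp add: convex_def linear_add linear_scale)

lemma linear_transpose: "linear (transpose :: 'a::real_algebra_1^'n^'m \<Rightarrow> 'a^'m^'n)"
  by (rule linearI) (simp_all add: transpose_def vec_eq_iff)

lemma matrix_inv_transpose:
  fixes A :: "'a::field^'n^'n"
  assumes "invertible A"
  shows "matrix_inv (transpose A) = transpose (matrix_inv A)"
  using matrix_inv_right[OF assms]
  by (intro matrix_inv_unique) (metis matrix_transpose_mul transpose_mat)

lemma swap_half_swap_half [simp]: "swap_half (swap_half x) = x"
  by (cases x) auto

lemma R_mat_mult_R_mat: "R_mat ** R_mat = (mat 1 :: complex^('n::finite + 'n)^('n + 'n))"
proof -
  have "(R_mat ** R_mat :: complex^('n + 'n)^('n + 'n)) $ i $ j = mat 1 $ i $ j" for i j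
  proof -
    have "(R_mat ** R_mat :: complex^('n + 'n)^('n + 'n)) $ i $ j
        = (\<Sum>k\<in>UNIV. (if k = swap_half i then 1 else 0) * (if j = swap_half k then 1 else 0))"
      by (simp add: matrix_matrix_mult_def R_mat_def)
    also have "\<dots> = (\<Sum>k\<in>UNIV. if k = swap_half i then (if j = swap_half k then 1 else 0) else 0)"
      by (intro sum.cong) auto
    also have "\<dots> = mat 1 $ i $ j"
      by (simp add: sum.delta' mat_def)
    finally show ?thesis .
  qed
  then show ?thesis
    by (simp add: vec_eq_iff)
qed

lemma linear_P_conj: "linear P_conj"
  by (rule linearI) (simp_all add: P_conj_def matrix_add_ldistrib matrix_add_rdistrib
      matrix_scalar_ac flip: scalar_matrix_assoc)

lemma matrix_inv_P_conj:
  assumes "invertible A"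
  shows "matrix_inv (P_conj A) = P_conj (matrix_inv A)"
proof (rule matrix_inv_unique)
  have "P_conj (matrix_inv A) ** P_conj A = R_mat ** (matrix_inv A ** (R_mat ** R_mat) ** A) ** R_mat"
    by (simp add: P_conj_def matrix_mul_assoc)
  then show "P_conj (matrix_inv A) ** P_conj A = mat 1"
    by (simp add: R_mat_mult_R_mat matrix_inv_left[OF assms])
qed

lemma path_connected_unitary_nonsingular_diff_symmetric:
  fixes S :: "complex^'n^'n" and F :: "(complex^'n^'n \<Rightarrow> complex^'n^'n) set"
  assumes S: "S \<in> unitary_group"
    and linear: "\<And>f. f \<in> F \<Longrightarrow> linear f"
    and fixes_S: "\<And>f. f \<in> F \<Longrightarrow> f S = S"
    and commutes_inv: "\<And>f X. f \<in> F \<Longrightarrow> invertible X \<Longrightarrow> matrix_inv (f X) = f (matrix_inv X)"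
  shows "path_connected {M \<in> unitary_group. det (S - M) \<noteq> 0 \<and> (\<forall>f\<in>F. M = f M)}"
proof -
  have "{M. \<forall>f\<in>F. M = f M} = (\<Inter>f\<in>F. {M. M = f M})"
    by blast
  then have "convex {M. \<forall>f\<in>F. M = f M}"
    using linear by (simp add: convex_INT convex_fixpoints_linear)
  moreover have "S - X = f (S - X)" if "\<forall>f\<in>F. X = f X" "f \<in> F" for X f
    using that linear[OF \<open>f \<in> F\<close>] fixes_S[OF \<open>f \<in> F\<close>] by (metis linear_diff)
  moreover have "matrix_inv X = f (matrix_inv X)" if "\<forall>f\<in>F. X = f X" "invertible X" "f \<in> F" for X f
    using that commutes_inv by metis
  ultimately show ?thesis
    using path_connected_unitary_nonsingular_diff[OF S, of "{M. \<forall>f\<in>F. M = f M}"] by auto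
qed

theorem mainTheorem10:
  fixes S0 :: "complex ^('n::finite + 'n) ^('n + 'n)"
  assumes "S0 \<in> unitary_group"
  defines "U1 \<equiv> {M \<in> unitary_group. det (S0 - M) \<noteq> 0}"
  shows "path_connected U1
    \<and> (S0 = transpose S0 \<longrightarrow> path_connected {M \<in> U1. M = transpose M})
    \<and> (S0 = P_conj S0 \<longrightarrow> path_connected {M \<in> U1. M = P_conj M})
    \<and> (S0 = transpose S0 \<and> S0 = P_conj S0 \<longrightarrow>
           path_connected {M \<in> U1. M = transpose M \<and> M = P_conj M})"
proof -
  have symmetric: "path_connected {M \<in> U1. \<forall>f\<in>F. M = f M}"
    if "F \<subseteq> {transpose, P_conj}" "\<forall>f\<in>F. S0 = f S0" for F
  proof -
    have "path_connected {M \<in> unitary_group. det (S0 - M) \<noteq> 0 \<and> (\<forall>f\<in>F. M = f M)}"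
      using that linear_transpose linear_P_conj matrix_inv_transpose matrix_inv_P_conj
      by (intro path_connected_unitary_nonsingular_diff_symmetric[OF assms(1)]) auto
    then show ?thesis
      unfolding U1_def by (simp add: conj_assoc)
  qed
  show ?thesis
    using symmetric[of "{}"] symmetric[of "{transpose}"] symmetric[of "{P_conj}"]
      symmetric[of "{transpose, P_conj}"]
    by simp
qed

end
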